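(* Consider the quantized sensor-network model described in the context, and fix $p\in\{1,\dots,P\}$. If the dimension $D_p$ of the attack parameter $\boldsymbol{\tau}^{(p)}$ satisfies $$D_p>\sum_{j\in\mathcal{A}_p}K_j\,(R_j-1),$$ then the matrix $\mathbf{J}_{\boldsymbol{\tau}^{(p)}}$ is singular, and moreover the Fisher information matrix $\mathbf{J}_{\boldsymbol{\Theta}}$ is also singular.
   Context: Sensors are indexed by $j\in\{1,\dots,N\}$. Sensor $j$ acquires $K_j$ scalar measurements $\tilde x_{jk}$, $k=1,\dots,K_j$, each quantized by an $R_j$-level quantizer with fixed disjoint regions $I_j^{(1)},\dots,I_j^{(R_j)}$ partitioning $\mathbb{R}$, producing $\tilde u_{jk}=\sum_{r=1}^{R_j} r\,\mathbb{1}\{\tilde x_{jk}\in I_j^{(r)}\}$. The sensor set is partitioned into disjoint sets $\mathcal{A}_0$ (unattacked sensors) and $\mathcal{A}_1,\dots,\mathcal{A}_P$ (attacked sensors, grouped by attack). There is an unknown deterministic parameter $\boldsymbol{\theta}\in\mathbb{R}^{D_{\boldsymbol\theta}}$ and unknown deterministic attack parameters $\boldsymbol{\tau}^{(p)}\in\mathbb{R}^{D_p}$, $p=1,\dots,P$. The measurements $\{\tilde x_{jk}\}$ are independent; $\tilde x_{jk}$ has pdf $f_{jk}(\cdot\mid\boldsymbol\theta)$ if $j\in\mathcal{A}_0$ and pdf $g_{jk}(\cdot\mid\boldsymbol\theta,\boldsymbol\tau^{(p)})$ if $j\in\mathcal{A}_p$, $p\ge1$. Let $p_{jr}^{(k)}=\Pr(\tilde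 u_{jk}=r)$, i.e. $p_{jr}^{(k)}=\int_{I_j^{(r)}}f_{jk}(x\mid\boldsymbol\theta)\,dx$ for $j\in\mathcal{A}_0$ and $p_{jr}^{(k)}=\int_{I_j^{(r)}}g_{jk}(x\mid\boldsymbol\theta,\boldsymbol\tau^{(p)})\,dx$ for $j\in\mathcal{A}_p$; these are assumed positive and differentiable in the parameters. Let $\boldsymbol\Theta=[\boldsymbol\theta^T,(\boldsymbol\tau^{(1)})^T,\dots,(\boldsymbol\tau^{(P)})^T]^T$. The Fisher information matrix of the quantized data $\{\tilde u_{jk}\}$ for $\boldsymbol\Theta$ is $\mathbf{J}_{\boldsymbol\Theta}=\sum_{j=1}^N\sum_{k=1}^{K_j}\sum_{r=1}^{R_j}\frac{1}{p_{jr}^{(k)}}\frac{\partial p_{jr}^{(k)}}{\partial\boldsymbol\Theta}\Big[\frac{\partial p_{jr}^{(k)}}{\partial\boldsymbol\Theta}\Big]^T$. For $p\ge1$, $\mathbf{J}_{\boldsymbol\tau^{(p)}}=\sum_{j\in\mathcal{A}_p}\sum_{k=1}^{K_j}\sum_{r=1}^{R_j}\frac{1}{p_{jr}^{(k)}}\frac{\partial p_{jr}^{(k)}}{\partial\boldsymbol\tau^{(p)}}\Big[\frac{\partial p_{jr}^{(k)}}{\partial\boldsymbol\tau^{(p)}}\Big]^T\in\mathbb{R}^{D_p\times D_p}$ (the diagonal block of $\mathbf{J}_{\boldsymbol\Theta}$ corresponding to $\boldsymbol\tau^{(p)}$). *)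

theory Defs
  imports "HOL-Analysis.Analysis" "Jordan_Normal_Form.Determinant"
begin

text \<open>Real vectors of dimension d are encoded as functions nat => real
  vanishing from index d on.\<close>
definition rvec :: "nat \<Rightarrow> (nat \<Rightarrow> real) set" where
  "rvec d = {v. \<forall>i\<ge>d. v i = 0}"

text \<open>Layout of Theta = [theta; tau^(1); ...; tau^(P)]: theta occupies
  indices 0..<Dth, tau^(q) occupies indices off Dth D q ..< off Dth D q + D q.\<close>
definition off :: "nat \<Rightarrow> (nat \<Rightarrow> nat) \<Rightarrow> nat \<Rightarrow> nat" where
  "off Dth D q = Dth + (\<Sum>q'\<in>{1..<q}. D q')"

definition Dtot :: "nat \<Rightarrow> (nat \<Rightarrow> nat) \<Rightarrow> nat \<Rightarrow> nat" where
  "Dtot Dth D P = Dth + (\<Sum>q\<in>{1..P}. D q)"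

definition theta_of :: "nat \<Rightarrow> (nat \<Rightarrow> real) \<Rightarrow> nat \<Rightarrow> real" where
  "theta_of Dth Th = (\<lambda>i. if i < Dth then Th i else 0)"

definition tau_of :: "nat \<Rightarrow> (nat \<Rightarrow> nat) \<Rightarrow> nat \<Rightarrow> (nat \<Rightarrow> real) \<Rightarrow> nat \<Rightarrow> real" where
  "tau_of Dth D q Th = (\<lambda>i. if i < D q then Th (off Dth D q + i) else 0)"

text \<open>Probability p_{jr}^{(k)} of the quantized output r, as a function of Theta.
  grp j = 0 means j is in A_0; grp j = q \<ge> 1 means j is in A_q.
  f j k theta x is the pdf for unattacked sensors, g j k theta tau x the pdf for attacked ones.\<close>
definition qprob ::
  "(nat \<Rightarrow> nat \<Rightarrow> (nat \<Rightarrow> real) \<Rightarrow> real \<Rightarrow> real) \<Rightarrow>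
   (nat \<Rightarrow> nat \<Rightarrow> (nat \<Rightarrow> real) \<Rightarrow> (nat \<Rightarrow> real) \<Rightarrow> real \<Rightarrow> real) \<Rightarrow>
   (nat \<Rightarrow> nat \<Rightarrow> real set) \<Rightarrow> (nat \<Rightarrow> nat) \<Rightarrow> nat \<Rightarrow> (nat \<Rightarrow> nat) \<Rightarrow>
   nat \<Rightarrow> nat \<Rightarrow> nat \<Rightarrow> (nat \<Rightarrow> real) \<Rightarrow> real" where
  "qprob f g I grp Dth D j k r Th =
     (if grp j = 0 then (LINT x:I j r|lborel. f j k (theta_of Dth Th) x)
      else (LINT x:I j r|lborel. g j k (theta_of Dth Th) (tau_of Dth D (grp j) Th) x))"

definition pderiv_at :: "((nat \<Rightarrow> real) \<Rightarrow> real) \<Rightarrow> nat \<Rightarrow> (nat \<Rightarrow> real) \<Rightarrow> real" where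
  "pderiv_at h i Th = deriv (\<lambda>t. h (Th(i := Th i + t))) 0"

definition FIM_Theta where
  "FIM_Theta f g I grp Dth D P N K R Th =
     mat (Dtot Dth D P) (Dtot Dth D P) (\<lambda>(a,b).
       \<Sum>j\<in>{1..N}. \<Sum>k\<in>{1..K j}. \<Sum>r\<in>{1..R j}.
         1 / qprob f g I grp Dth D j k r Th
         * pderiv_at (qprob f g I grp Dth D j k r) a Th
         * pderiv_at (qprob f g I grp Dth D j k r) b Th)"

definition FIM_tau where
  "FIM_tau f g I grp Dth D N K R p Th =
     mat (D p) (D p) (\<lambda>(a,b).
       \<Sum>j\<in>{j\<in>{1..N}. grp j = p}. \<Sum>k\<in>{1..K j}. \<Sum>r\<in>{1..R j}.
         1 / qprob f g I grp Dth D j k r Th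
         * pderiv_at (qprob f g I grp Dth D j k r) (off Dth D p + a) Th
         * pderiv_at (qprob f g I grp Dth D j k r) (off Dth D p + b) Th)"

end

theory Submission
  imports Defs
begin

text \<open>For each sensor j and sample k the R_j output probabilities sum to one, so their
  gradients sum to zero and at most R_j - 1 of them are linearly independent.  The
  tau^(p)-gradients of the sensors in A_p therefore span a space of dimension at most the sum
  of K_j (R_j - 1), and sensors outside A_p do not depend on tau^(p) at all.  If D_p exceeds
  that sum, some nonzero v is orthogonal to all these gradients; J_{tau^(p)} annihilates v,
  and J_Theta annihilates v placed in the tau^(p) block of Theta.\<close>

lemma sum_set_lebesgue_integral_partition:
  fixes h :: "'a \<Rightarrow> real" and A :: "'i \<Rightarrow> 'a set"
  assumes "finite S" and meas: "\<And>r. r \<in> S \<Longrightarrow> A r \<in> sets M"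
    and disj: "\<And>r r'. r \<in> S \<Longrightarrow> r' \<in> S \<Longrightarrow> r \<noteq> r' \<Longrightarrow> A r \<inter> A r' = {}"
    and cover: "space M \<subseteq> (\<Union>r\<in>S. A r)" and h: "integrable M h"
  shows "(\<Sum>r\<in>S. LINT x:A r|M. h x) = (LINT x|M. h x)"
proof -
  have "(\<Sum>r\<in>S. LINT x:A r|M. h x) = (LINT x|M. (\<Sum>r\<in>S. indicator (A r) x *\<^sub>R h x))"
    unfolding set_lebesgue_integral_def
    by (rule Bochner_Integration.integral_sum[symmetric])
      (use meas h integrable_mult_indicator in blast)
  also have "\<dots> = (LINT x|M. h x)"
  proof (rule Bochner_Integration.integral_cong[OF refl])
    fix x assume "x \<in> space M"
    then obtain r0 where r0: "r0 \<in> S" "x \<in> A r0" using cover by blast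
    have "(\<Sum>r\<in>S. indicator (A r) x *\<^sub>R h x) = (\<Sum>r\<in>S. if r = r0 then h x else 0)"
      by (rule sum.cong) (use r0 disj in \<open>auto simp: indicator_def\<close>)
    then show "(\<Sum>r\<in>S. indicator (A r) x *\<^sub>R h x) = h x"
      using r0 \<open>finite S\<close> by simp
  qed
  finally show ?thesis .
qed

lemma sum_pderiv_at_eq_0_if_sum_const:
  fixes h :: "'i \<Rightarrow> (nat \<Rightarrow> real) \<Rightarrow> real"
  assumes "finite S"
    and diff: "\<And>r. r \<in> S \<Longrightarrow> (\<lambda>t. h r (Th(i := Th i + t))) differentiable (at 0)"
    and const: "\<And>Th'. (\<Sum>r\<in>S. h r Th') = c"
  shows "(\<Sum>r\<in>S. pderiv_at (h r) i Th) = 0"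
proof -
  have "((\<lambda>t. \<Sum>r\<in>S. h r (Th(i := Th i + t))) has_real_derivative
          (\<Sum>r\<in>S. pderiv_at (h r) i Th)) (at 0)"
    unfolding pderiv_at_def
    by (rule DERIV_sum) (use diff DERIV_deriv_iff_real_differentiable in blast)
  moreover have "((\<lambda>t. \<Sum>r\<in>S. h r (Th(i := Th i + t))) has_real_derivative 0) (at 0)"
    using const by simp
  ultimately show ?thesis using DERIV_unique by blast
qed

lemma exists_nonzero_vec_orthogonal:
  fixes c :: "'e \<Rightarrow> nat \<Rightarrow> 'a :: idom"
  assumes "finite E" and "card E < n"
  shows "\<exists>v \<in> carrier_vec n. v \<noteq> 0\<^sub>v n \<and> (\<forall>e\<in>E. (\<Sum>a=0..<n. c e a * v $ a) = 0)"
proof -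
  obtain e where e: "bij_betw e {0..<card E} E"
    using ex_bij_betw_nat_finite[OF \<open>finite E\<close>] by blast
  define row where "row i = vec n (\<lambda>a. if i < card E then c (e i) a else 0)" for i
  define M where "M = mat\<^sub>r n n (\<lambda>i. if i = card E then 0\<^sub>v n else row i)"
  have "det M = 0"
    unfolding M_def by (rule det_row_0) (use assms in \<open>auto simp: row_def\<close>)
  then obtain v where v: "v \<in> carrier_vec n" "v \<noteq> 0\<^sub>v n" "M *\<^sub>v v = 0\<^sub>v n"
    using det_0_iff_vec_prod_zero[of M n] by (auto simp: M_def)
  have "(\<Sum>a=0..<n. c x a * v $ a) = 0" if "x \<in> E" for x
  proof -
    obtain i where i: "i < card E" "e i = x"
      using e \<open>x \<in> E\<close> unfolding bij_betw_def by force
    have "0 = (M *\<^sub>v v) $ i" using v(3) i assms by simp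
    also have "\<dots> = (\<Sum>a=0..<n. c x a * v $ a)"
      using i assms v(1) by (simp add: M_def row_def scalar_prod_def)
    finally show ?thesis by simp
  qed
  with v show ?thesis by blast
qed

lemma orthogonal_all_of_sum_eq_0:
  fixes u :: "nat \<Rightarrow> nat \<Rightarrow> 'a :: comm_ring"
  assumes sum0: "\<And>a. a < n \<Longrightarrow> (\<Sum>r\<in>{1..R}. u r a) = 0"
    and orth: "\<And>r. r \<in> {1..<R} \<Longrightarrow> (\<Sum>a=0..<n. u r a * v a) = 0"
    and r: "r \<in> {1..R}"
  shows "(\<Sum>a=0..<n. u r a * v a) = 0"
proof (cases "r = R")
  case True
  have "(\<Sum>r\<in>{1..R}. \<Sum>a=0..<n. u r a * v a) = (\<Sum>a=0..<n. (\<Sum>r\<in>{1..R}. u r a) * v a)"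
    by (subst sum.swap) (simp add: sum_distrib_right)
  also have "\<dots> = 0" using sum0 by simp
  also have "{1..R} = insert R {1..<R}" using r by auto
  finally show ?thesis using orth True by simp
qed (use orth r in auto)

lemma det_mat_sum_outer_eq_0:
  fixes F u :: "'j \<Rightarrow> 'k \<Rightarrow> 'r \<Rightarrow> nat \<Rightarrow> 'a :: idom"
  assumes v: "v \<in> carrier_vec n" "v \<noteq> 0\<^sub>v n"
    and orth: "\<And>j k r. j \<in> J \<Longrightarrow> k \<in> K j \<Longrightarrow> r \<in> R j \<Longrightarrow> (\<Sum>b=0..<n. u j k r b * v $ b) = 0"
  shows "det (mat n n (\<lambda>(a, b). \<Sum>j\<in>J. \<Sum>k\<in>K j. \<Sum>r\<in>R j. F j k r a * u j k r b)) = 0"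
    (is "det ?M = 0")
proof -
  have "?M *\<^sub>v v = 0\<^sub>v n"
  proof (rule eq_vecI)
    fix a assume "a < dim_vec (0\<^sub>v n)"
    then have "a < n" by simp
    then have "(?M *\<^sub>v v) $ a = (\<Sum>b=0..<n. \<Sum>j\<in>J. \<Sum>k\<in>K j. \<Sum>r\<in>R j. F j k r a * (u j k r b * v $ b))"
      using v(1) by (simp add: scalar_prod_def sum_distrib_right mult.assoc)
    also have "\<dots> = (\<Sum>j\<in>J. \<Sum>k\<in>K j. \<Sum>r\<in>R j. F j k r a * (\<Sum>b=0..<n. u j k r b * v $ b))"
      by (simp add: sum.swap[of _ "{0..<n}"] sum_distrib_left)
    also have "\<dots> = 0" using orth by simp
    finally show "(?M *\<^sub>v v) $ a = 0\<^sub>v n $ a" using \<open>a < n\<close> by simp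
  qed simp
  then show ?thesis
    using det_0_iff_vec_prod_zero[of ?M n] v by auto
qed

definition embed_vec :: "nat \<Rightarrow> nat \<Rightarrow> 'a vec \<Rightarrow> 'a :: zero vec" where
  "embed_vec m ofs v = vec m (\<lambda>b. if ofs \<le> b \<and> b < ofs + dim_vec v then v $ (b - ofs) else 0)"

lemma embed_vec_carrier: "embed_vec m ofs v \<in> carrier_vec m"
  by (simp add: embed_vec_def)

lemma embed_vec_neq_0:
  assumes "ofs + n \<le> m" "v \<in> carrier_vec n" "v \<noteq> 0\<^sub>v n"
  shows "embed_vec m ofs v \<noteq> 0\<^sub>v m"
proof
  assume embed0: "embed_vec m ofs v = 0\<^sub>v m"
  have "v $ a = embed_vec m ofs v $ (ofs + a)" if "a < n" for a
    using assms that by (simp add: embed_vec_def)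
  then have "v = 0\<^sub>v n" using assms by (intro eq_vecI) (auto simp: embed0)
  with assms show False by simp
qed

lemma sum_mult_embed_vec:
  fixes u :: "nat \<Rightarrow> 'a :: semiring_0"
  assumes "ofs + n \<le> m" "v \<in> carrier_vec n"
  shows "(\<Sum>b=0..<m. u b * embed_vec m ofs v $ b) = (\<Sum>a=0..<n. u (ofs + a) * v $ a)"
proof -
  have "(\<Sum>b=0..<m. u b * embed_vec m ofs v $ b) = (\<Sum>b\<in>{ofs..<ofs + n}. u b * v $ (b - ofs))"
    by (rule sum.mono_neutral_cong_right) (use assms in \<open>auto simp: embed_vec_def\<close>)
  also have "\<dots> = (\<Sum>a=0..<n. u (ofs + a) * v $ a)"
    using sum.shift_bounds_nat_ivl[of "\<lambda>b. u b * v $ (b - ofs)" 0 ofs n]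
    by (simp add: add.commute)
  finally show ?thesis .
qed

lemma off_add_le_off:
  assumes "1 \<le> q" "q < p"
  shows "off Dth D q + D q \<le> off Dth D p"
proof -
  have "sum D {1..<Suc q} \<le> sum D {1..<p}"
    by (rule sum_mono2) (use assms in auto)
  then show ?thesis using assms(1) by (simp add: off_def)
qed

lemma off_add_le_Dtot:
  assumes "1 \<le> p" "p \<le> P"
  shows "off Dth D p + D p \<le> Dtot Dth D P"
proof -
  have "sum D {1..<Suc p} \<le> sum D {1..P}"
    by (rule sum_mono2) (use assms in auto)
  then show ?thesis using assms(1) by (simp add: off_def Dtot_def)
qed

lemma theta_of_upd_tau_block:
  "theta_of Dth (Th(off Dth D p + a := x)) = theta_of Dth Th"
  by (auto simp: theta_of_def off_def)

lemma tau_of_upd_other_block: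
  assumes "1 \<le> p" "1 \<le> q" "q \<noteq> p" "a < D p"
  shows "tau_of Dth D q (Th(off Dth D p + a := x)) = tau_of Dth D q Th"
proof -
  have "off Dth D q + i \<noteq> off Dth D p + a" if "i < D q" for i
    using assms that off_add_le_off[of q p Dth D] off_add_le_off[of p q Dth D]
    by (cases "q < p") auto
  then show ?thesis by (auto simp: tau_of_def)
qed

lemma pderiv_at_qprob_other_block:
  assumes "1 \<le> p" "grp j \<noteq> p" "a < D p"
  shows "pderiv_at (qprob f g I grp Dth D j k r) (off Dth D p + a) Th = 0"
proof -
  have "qprob f g I grp Dth D j k r (Th(off Dth D p + a := x)) = qprob f g I grp Dth D j k r Th" for x
    using assms theta_of_upd_tau_block tau_of_upd_other_block[of p "grp j"]
    by (cases "grp j = 0") (auto simp: qprob_def)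
  then show ?thesis by (simp add: pderiv_at_def)
qed

lemma sum_qprob_eq_1:
  assumes meas: "\<And>r. r \<in> {1..R} \<Longrightarrow> I j r \<in> sets borel"
    and disj: "\<And>r r'. r \<in> {1..R} \<Longrightarrow> r' \<in> {1..R} \<Longrightarrow> r \<noteq> r' \<Longrightarrow> I j r \<inter> I j r' = {}"
    and cover: "(\<Union>r\<in>{1..R}. I j r) = UNIV"
    and f: "grp j = 0 \<Longrightarrow> integrable lborel (f j k (theta_of Dth Th))
            \<and> (LINT x|lborel. f j k (theta_of Dth Th) x) = 1"
    and g: "grp j \<noteq> 0 \<Longrightarrow> integrable lborel (g j k (theta_of Dth Th) (tau_of Dth D (grp j) Th))
            \<and> (LINT x|lborel. g j k (theta_of Dth Th) (tau_of Dth D (grp j) Th) x) = 1"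
  shows "(\<Sum>r\<in>{1..R}. qprob f g I grp Dth D j k r Th) = 1"
proof -
  define h where "h = (if grp j = 0 then f j k (theta_of Dth Th)
                        else g j k (theta_of Dth Th) (tau_of Dth D (grp j) Th))"
  have "(\<Sum>r\<in>{1..R}. qprob f g I grp Dth D j k r Th) = (\<Sum>r\<in>{1..R}. LINT x:I j r|lborel. h x)"
    by (simp add: qprob_def h_def)
  also have "\<dots> = (LINT x|lborel. h x)"
    by (rule sum_set_lebesgue_integral_partition) (use meas disj cover f g in \<open>auto simp: h_def\<close>)
  also have "\<dots> = 1" using f g by (simp add: h_def)
  finally show ?thesis .
qed

theorem theorem1:
  fixes f :: "nat \<Rightarrow> nat \<Rightarrow> (nat \<Rightarrow> real) \<Rightarrow> real \<Rightarrow> real"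
    and g :: "nat \<Rightarrow> nat \<Rightarrow> (nat \<Rightarrow> real) \<Rightarrow> (nat \<Rightarrow> real) \<Rightarrow> real \<Rightarrow> real"
    and I :: "nat \<Rightarrow> nat \<Rightarrow> real set"
    and grp :: "nat \<Rightarrow> nat" and N P Dth p :: nat and D K R :: "nat \<Rightarrow> nat"
    and Th0 :: "nat \<Rightarrow> real"
  assumes grp_range: "\<And>j. j \<in> {1..N} \<Longrightarrow> grp j \<le> P"
    and regions_meas: "\<And>j r. j \<in> {1..N} \<Longrightarrow> r \<in> {1..R j} \<Longrightarrow> I j r \<in> sets borel"
    and regions_disj: "\<And>j r r'. j \<in> {1..N} \<Longrightarrow> r \<in> {1..R j} \<Longrightarrow> r' \<in> {1..R j} \<Longrightarrow>
          r \<noteq> r' \<Longrightarrow> I j r \<inter> I j r' = {}"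
    and regions_cover: "\<And>j. j \<in> {1..N} \<Longrightarrow> (\<Union>r\<in>{1..R j}. I j r) = UNIV"
    and f_pdf: "\<And>j k th. j \<in> {1..N} \<Longrightarrow> grp j = 0 \<Longrightarrow> k \<in> {1..K j} \<Longrightarrow> th \<in> rvec Dth \<Longrightarrow>
          (\<forall>x. 0 \<le> f j k th x) \<and> integrable lborel (f j k th) \<and> (LINT x|lborel. f j k th x) = 1"
    and g_pdf: "\<And>j k th tau. j \<in> {1..N} \<Longrightarrow> grp j \<ge> 1 \<Longrightarrow> k \<in> {1..K j} \<Longrightarrow>
          th \<in> rvec Dth \<Longrightarrow> tau \<in> rvec (D (grp j)) \<Longrightarrow>
          (\<forall>x. 0 \<le> g j k th tau x) \<and> integrable lborel (g j k th tau)
          \<and> (LINT x|lborel. g j k th tau x) = 1"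
    and prob_pos: "\<And>j k r Th. j \<in> {1..N} \<Longrightarrow> k \<in> {1..K j} \<Longrightarrow> r \<in> {1..R j} \<Longrightarrow>
          Th \<in> rvec (Dtot Dth D P) \<Longrightarrow> qprob f g I grp Dth D j k r Th > 0"
    and prob_diff: "\<And>j k r Th i. j \<in> {1..N} \<Longrightarrow> k \<in> {1..K j} \<Longrightarrow> r \<in> {1..R j} \<Longrightarrow>
          Th \<in> rvec (Dtot Dth D P) \<Longrightarrow> i < Dtot Dth D P \<Longrightarrow>
          (\<lambda>t. qprob f g I grp Dth D j k r (Th(i := Th i + t))) differentiable (at 0)"
    and Th0: "Th0 \<in> rvec (Dtot Dth D P)"
    and p: "p \<in> {1..P}"
    and dim: "D p > (\<Sum>j\<in>{j\<in>{1..N}. grp j = p}. K j * (R j - 1))"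
  shows "det (FIM_tau f g I grp Dth D N K R p Th0) = 0
       \<and> det (FIM_Theta f g I grp Dth D P N K R Th0) = 0"
proof -
  define A where "A = {j\<in>{1..N}. grp j = p}"
  define pd where "pd j k r i = pderiv_at (qprob f g I grp Dth D j k r) i Th0" for j k r i
  define ofs where "ofs = off Dth D p"
  have block: "ofs + D p \<le> Dtot Dth D P" using p off_add_le_Dtot by (simp add: ofs_def)
  have sum_pd: "(\<Sum>r\<in>{1..R j}. pd j k r i) = 0"
    if "j \<in> {1..N}" "k \<in> {1..K j}" "i < Dtot Dth D P" for j k i
    unfolding pd_def
  proof (rule sum_pderiv_at_eq_0_if_sum_const)
    show "(\<Sum>r\<in>{1..R j}. qprob f g I grp Dth D j k r Th) = 1" for Th
      by (rule sum_qprob_eq_1) (use that regions_meas regions_disj regions_cover f_pdf g_pdf in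
          \<open>auto simp: rvec_def theta_of_def tau_of_def\<close>)
  qed (use that prob_diff Th0 in auto)
  define E where "E = Sigma A (\<lambda>j. {1..K j} \<times> {1..<R j})"
  have "card E = (\<Sum>j\<in>A. K j * (R j - 1))"
    by (simp add: E_def A_def card_SigmaI card_cartesian_product)
  then obtain v where v: "v \<in> carrier_vec (D p)" "v \<noteq> 0\<^sub>v (D p)"
    and orth_E: "\<And>j k r. (j, k, r) \<in> E \<Longrightarrow> (\<Sum>a=0..<D p. pd j k r (ofs + a) * v $ a) = 0"
    using exists_nonzero_vec_orthogonal[of E "D p" "\<lambda>(j, k, r) a. pd j k r (ofs + a)"] dim
    by (auto simp: E_def A_def)
  have orth: "(\<Sum>a=0..<D p. pd j k r (ofs + a) * v $ a) = 0"
    if "j \<in> {1..N}" "k \<in> {1..K j}" "r \<in> {1..R j}" for j k r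
  proof (cases "grp j = p")
    case True
    show ?thesis
      by (rule orthogonal_all_of_sum_eq_0[where R = "R j"])
        (use that True sum_pd block orth_E in \<open>auto simp: E_def A_def\<close>)
  qed (use p pderiv_at_qprob_other_block in \<open>simp add: pd_def ofs_def\<close>)
  have "det (FIM_tau f g I grp Dth D N K R p Th0) = 0"
    unfolding FIM_tau_def
    by (rule det_mat_sum_outer_eq_0[OF v]) (use orth in \<open>simp add: pd_def ofs_def\<close>)
  moreover have "det (FIM_Theta f g I grp Dth D P N K R Th0) = 0"
    unfolding FIM_Theta_def
    by (rule det_mat_sum_outer_eq_0[OF embed_vec_carrier embed_vec_neq_0[OF block v]])
      (use orth sum_mult_embed_vec[OF block v(1)] in \<open>simp add: pd_def\<close>)
  ultimately show ?thesis by simp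
qed

end
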